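(* Let $p\in\mathbb{N}^*$ and $\gamma\geq1$. Let $V$ be a subset of a normed vector space and let $F:\mathbb{R}^p\to V$ be a homeomorphism which is Lip-$\gamma$. Endow $V$ with the $F$-induced atlas $(F(B_p(x,1)),\phi_x\circ F^{-1})_{x\in I}$. Then the inverses of the chart maps, i.e. the maps $(\phi_x\circ F^{-1}|_{F(B_p(x,1))})^{-1}:B_p(0,1)\to V$, $x\in I$, are Lip-$\gamma$ in the classical sense, with Lip-$\gamma$ norms bounded uniformly in $x\in I$.
   Context: Lip-$\gamma$ (Stein sense): for $m$ the integer with $0<\gamma-m\le1$, a map $g$ on an open set is Lip-$\gamma$ with norm $\le M$ if it is $m$ times differentiable, $\|D^kg(x)(v)\|\le M\|v\|$ and the Taylor remainders $R_k(x,y)$ defined by $D^kg(x)(v)=\sum_{j=k}^m D^jg(y)\big(\frac{v\otimes(x-y)^{\otimes(j-k)}}{(j-k)!}\big)+R_k(x,y)(v)$ satisfy $\|R_k(x,y)(v)\|\le M\|x-y\|^{\gamma-k}\|v\|$. Standard atlas on $\mathbb{R}^p$: let $(e_i)$ be the canonical basis, $I=\{\sum_{i=1}^p \frac{k_i}{\sqrt p}e_i:k_i\in\mathbb{Z}\}$, $\varphi:\mathbb{R}^p\to\mathbb{R}^p$ a Lip-$\gamma$ map equal to the identity on $B_p(0,1)$ with support in $B_p(0,2)$, and $\phi_x(y)=\varphi(y-x)$; the charts are $(B_p(x,1),\phi_x)_{x\in I}$. *)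

theory Defs
  imports "HOL-Analysis.Analysis"
begin

(* m = the integer with 0 < gamma - m <= 1 (for gamma > 0) *)
definition lip_order :: "real \<Rightarrow> nat" where
  "lip_order \<gamma> = nat (\<lceil>\<gamma>\<rceil> - 1)"

definition multilinear_list :: "nat \<Rightarrow> ('a::real_vector list \<Rightarrow> 'b::real_vector) \<Rightarrow> bool" where
  "multilinear_list k f \<longleftrightarrow>
     (\<forall>i<k. \<forall>vs. length vs = k \<longrightarrow> linear (\<lambda>h. f (vs[i := h])))"

(* Lip-gamma in the sense of Stein, with norm <= M, on the open set U.
   D k x is the k-th derivative of g at x, as a k-multilinear map. *)
definition Lip_gamma ::
  "real \<Rightarrow> real \<Rightarrow> 'a::real_normed_vector set \<Rightarrow> ('a \<Rightarrow> 'b::real_normed_vector) \<Rightarrow> bool" where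
  "Lip_gamma \<gamma> M U g \<longleftrightarrow> open U \<and>
    (\<exists>D :: nat \<Rightarrow> 'a \<Rightarrow> 'a list \<Rightarrow> 'b.
      (\<forall>x\<in>U. D 0 x [] = g x) \<and>
      (\<forall>k\<le>lip_order \<gamma>. \<forall>x\<in>U. multilinear_list k (D k x)) \<and>
      (\<forall>k<lip_order \<gamma>. \<forall>x\<in>U. \<forall>vs. length vs = k \<longrightarrow>
          ((\<lambda>y. D k y vs) has_derivative (\<lambda>h. D (Suc k) x (vs @ [h]))) (at x)) \<and>
      (\<forall>k\<le>lip_order \<gamma>. \<forall>x\<in>U. \<forall>vs. length vs = k \<longrightarrow>
          norm (D k x vs) \<le> M * prod_list (map norm vs)) \<and>
      (\<forall>k\<le>lip_order \<gamma>. \<forall>x\<in>U. \<forall>y\<in>U. \<forall>vs. length vs = k \<longrightarrow>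
          norm (D k x vs - (\<Sum>j=k..lip_order \<gamma>.
                   (1 / fact (j - k)) *\<^sub>R D j y (vs @ replicate (j - k) (x - y))))
            \<le> M * norm (x - y) powr (\<gamma> - real k) * prod_list (map norm vs)))"

definition std_index_set :: "'a::euclidean_space set" where
  "std_index_set = range (\<lambda>k::'a \<Rightarrow> int.
      \<Sum>i\<in>Basis. (of_int (k i) / sqrt (real DIM('a))) *\<^sub>R i)"

end

theory Submission
  imports Defs
begin

(* On F(B(x,1)) we have G z - x \<in> B(0,1), where \<phi> is the identity, so the chart is
   z \<mapsto> G z - x and its inverse is the translate w \<mapsto> F (w + x) of F.  Translating a
   Lip-\<gamma> map does not change its Lip-\<gamma> norm, so MF bounds all inverse charts.  Only
   G \<circ> F = id and \<phi> = id on B(0,1) are used; the regularity and support of \<phi> are not. *)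

lemma Lip_gamma_cong:
  assumes "Lip_gamma \<gamma> M U f" and "\<And>x. x \<in> U \<Longrightarrow> g x = f x"
  shows "Lip_gamma \<gamma> M U g"
  using assms(1) unfolding Lip_gamma_def by (simp add: assms(2))

lemma Lip_gamma_translate:
  fixes f :: "'a::real_normed_vector \<Rightarrow> 'b::real_normed_vector"
  assumes f: "Lip_gamma \<gamma> M S f" and "open U" and into: "\<And>x. x \<in> U \<Longrightarrow> x + c \<in> S"
  shows "Lip_gamma \<gamma> M U (\<lambda>x. f (x + c))"
proof -
  let ?m = "lip_order \<gamma>"
  obtain D :: "nat \<Rightarrow> 'a \<Rightarrow> 'a list \<Rightarrow> 'b" where
    D0: "\<forall>x\<in>S. D 0 x [] = f x" and
    multilinear: "\<forall>k\<le>?m. \<forall>x\<in>S. multilinear_list k (D k x)" and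
    deriv: "\<forall>k<?m. \<forall>x\<in>S. \<forall>vs. length vs = k \<longrightarrow>
      ((\<lambda>y. D k y vs) has_derivative (\<lambda>h. D (Suc k) x (vs @ [h]))) (at x)" and
    bound: "\<forall>k\<le>?m. \<forall>x\<in>S. \<forall>vs. length vs = k \<longrightarrow>
      norm (D k x vs) \<le> M * prod_list (map norm vs)" and
    taylor: "\<forall>k\<le>?m. \<forall>x\<in>S. \<forall>y\<in>S. \<forall>vs. length vs = k \<longrightarrow>
      norm (D k x vs - (\<Sum>j=k..?m. (1 / fact (j - k)) *\<^sub>R D j y (vs @ replicate (j - k) (x - y))))
        \<le> M * norm (x - y) powr (\<gamma> - real k) * prod_list (map norm vs)"
    using f unfolding Lip_gamma_def by (elim conjE exE) (rule that, assumption+)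
  have deriv_shifted: "((\<lambda>y. D k (y + c) vs) has_derivative (\<lambda>h. D (Suc k) (x + c) (vs @ [h]))) (at x)"
    if "k < ?m" "x \<in> U" "length vs = k" for k x vs
  proof -
    have "((\<lambda>y. y + c) has_derivative (\<lambda>h. h)) (at x)"
      by (auto intro!: derivative_eq_intros)
    moreover have "((\<lambda>y. D k y vs) has_derivative (\<lambda>h. D (Suc k) (x + c) (vs @ [h]))) (at (x + c))"
      using deriv that into by blast
    ultimately show ?thesis
      using diff_chain_at by (fastforce simp: o_def)
  qed
  have taylor_shifted: "norm (D k (x + c) vs - (\<Sum>j=k..?m.
        (1 / fact (j - k)) *\<^sub>R D j (y + c) (vs @ replicate (j - k) (x - y))))
      \<le> M * norm (x - y) powr (\<gamma> - real k) * prod_list (map norm vs)"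
    if "k \<le> ?m" "x \<in> U" "y \<in> U" "length vs = k" for k x y vs
    using taylor[rule_format, of k "x + c" "y + c" vs] that into by simp
  show ?thesis
    unfolding Lip_gamma_def
  proof (intro conjI exI[of _ "\<lambda>k x. D k (x + c)"] ballI allI impI)
    show "open U" by fact
  qed (use D0 multilinear bound into deriv_shifted taylor_shifted in auto)
qed

lemma inv_chart_eq_translate:
  fixes F :: "'a::real_normed_vector \<Rightarrow> 'b"
  assumes GF: "\<And>y. G (F y) = y" and \<phi>_id: "\<forall>y\<in>ball 0 1. \<phi> y = y" and w: "w \<in> ball 0 1"
  shows "inv_into (F ` ball x 1) (\<lambda>z. \<phi> (G z - x)) w = F (w + x)"
proof (rule inv_into_f_eq)
  have \<phi>_shift: "\<phi> (y - x) = y - x" if "y \<in> ball x 1" for y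
  proof -
    have "y - x \<in> ball 0 1"
      using that by (simp add: dist_norm norm_minus_commute)
    with \<phi>_id show ?thesis by blast
  qed
  then show "inj_on (\<lambda>z. \<phi> (G z - x)) (F ` ball x 1)"
    by (auto simp: inj_on_def GF)
  show "F (w + x) \<in> F ` ball x 1" and "\<phi> (G (F (w + x)) - x) = w"
    using w \<phi>_shift[of "w + x"] by (auto simp: GF dist_norm)
qed

theorem mainTheorem6:
  fixes F :: "'a::euclidean_space \<Rightarrow> 'b::real_normed_vector"
    and G :: "'b \<Rightarrow> 'a"
    and V :: "'b set"
    and \<phi> :: "'a \<Rightarrow> 'a"
    and \<gamma> MF M\<phi> :: real
  assumes "\<gamma> \<ge> 1"
    and "homeomorphism UNIV V F G"
    and "Lip_gamma \<gamma> MF UNIV F"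
    and "Lip_gamma \<gamma> M\<phi> UNIV \<phi>"
    and "\<forall>y\<in>ball 0 1. \<phi> y = y"
    and "closure {y. \<phi> y \<noteq> 0} \<subseteq> ball 0 2"
  shows "\<exists>M. \<forall>x\<in>(std_index_set :: 'a set).
           Lip_gamma \<gamma> M (ball 0 1) (inv_into (F ` ball x 1) (\<lambda>z. \<phi> (G z - x)))"
proof (intro exI ballI)
  fix x :: 'a
  have GF: "\<And>y. G (F y) = y"
    using assms(2) by (simp add: homeomorphism_def)
  have "Lip_gamma \<gamma> MF (ball 0 1) (\<lambda>w. F (w + x))"
    using Lip_gamma_translate[OF assms(3)] by simp
  then show "Lip_gamma \<gamma> MF (ball 0 1) (inv_into (F ` ball x 1) (\<lambda>z. \<phi> (G z - x)))"
    using Lip_gamma_cong inv_chart_eq_translate[of G F, OF GF assms(5)] by blast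
qed

end
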